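(* Fix an integer $d\ge 8$. The sequence $\psi^{(k)}(\mathbf{0})$, $k=0,1,2,\dots$, does not converge pointwise, where $\mathbf{0}=(0,0,\dots)$ and $\psi^{(k)}$ is the $k$-fold iterate of $\psi$.
   Context: For a probability distribution $z=(z_i)_{i\in\mathbb{Z}}$ on $\mathbb{Z}$ set $A(z)_i=(z_{i-1}+z_i+z_{i+1})^d$ and $F(z)=A(z)/\sum_{i}A(z)_i$. Let $\mathcal{E}$ be the set of symmetric ($z_i=z_{-i}$) probability distributions on $\mathbb{Z}$ whose support is an interval of $\mathbb{Z}$ or all of $\mathbb{Z}$. Define $\mathsf R\colon\mathcal{E}\to[0,\infty)^{\{1,2,\dots\}}$ by $\mathsf R(z)_i=z_i/z_{i-1}$ if $z_{i-1}\ne0$ and $0$ otherwise; $\mathsf R$ is injective on $\mathcal{E}$, $\mathcal{R}:=\mathsf R(\mathcal{E})$, and $\psi:=\mathsf R\circ F\circ\mathsf R^{-1}\colon\mathcal{R}\to\mathcal{R}$. Explicitly $\psi(x)_1=\big(\frac{1+x_1+x_1x_2}{1+2x_1}\big)^d$ and $\psi(x)_n=x_{n-1}^d\big(\frac{1+x_n+x_nx_{n+1}}{1+x_{n-1}+x_{n-1}x_n}\big)^d$ for $n\ge2$. Note $\mathbf 0=\mathsf R(\delta_0)\in\mathcal{R}$. *)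

theory Defs
  imports Complex_Main
begin

text \<open>Sequences x = (x_1, x_2, ...) in [0,oo)^{1,2,...} are represented as functions
  nat => real; the entry at index 0 is unused (and psi always sets it to 0).
  psi is given by the explicit formula from the paper.\<close>

definition psi :: "nat \<Rightarrow> (nat \<Rightarrow> real) \<Rightarrow> (nat \<Rightarrow> real)" where
  "psi d x n =
     (if n = 0 then 0
      else if n = 1 then ((1 + x 1 + x 1 * x 2) / (1 + 2 * x 1)) ^ d
      else x (n - 1) ^ d *
           ((1 + x n + x n * x (n + 1)) / (1 + x (n - 1) + x (n - 1) * x n)) ^ d)"

end

theory Submission
  imports Defs
begin

text \<open>The region where all entries are nonnegative, x_1 \<le> 1 and x_n \<le> 1/100 for n \<ge> 2 is
  invariant under psi. On it the first coordinate evolves almost like the decreasing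
  one-dimensional map t \<mapsto> ((1 + t)/(1 + 2t))^d, up to replacing x_2 \<in> [0, 1/100] by its
  extreme values. For d \<ge> 8 there are b < a such that x_1 \<le> b forces the next x_1 \<ge> a and
  x_1 \<ge> a forces the next x_1 \<le> b; since x_1 = 0 initially, the first coordinate of the
  iterates oscillates between [0, b] and [a, 1].\<close>

definition trapped :: "(nat \<Rightarrow> real) \<Rightarrow> bool" where
  "trapped x \<longleftrightarrow> (\<forall>n\<ge>1. 0 \<le> x n) \<and> x 1 \<le> 1 \<and> (\<forall>n\<ge>2. x n \<le> 1/100)"

lemma psi_1: "psi d x 1 = ((1 + x 1 + x 1 * x 2) / (1 + 2 * x 1)) ^ d"
  by (simp add: psi_def)

lemma psi_ge_2:
  assumes "n \<ge> 2"
  shows "psi d x n = (x (n - 1) * ((1 + x n + x n * x (n + 1)) / (1 + x (n - 1) + x (n - 1) * x n))) ^ d"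
  using assms by (simp add: psi_def flip: power_mult_distrib)

lemma psi_nonneg:
  assumes "\<And>n. n \<ge> 1 \<Longrightarrow> 0 \<le> x n" "n \<ge> 1"
  shows "0 \<le> psi d x n"
proof (cases "n = 1")
  case True
  have "0 \<le> psi d x 1" using assms(1)[of 1] assms(1)[of 2] unfolding psi_1 by simp
  with True show ?thesis by simp
next
  case False
  then have "n \<ge> 2" using assms(2) by simp
  then show ?thesis using assms(1)[of "n - 1"] assms(1)[of n] assms(1)[of "n + 1"]
    by (simp add: psi_ge_2)
qed

lemma psi_1_le_one:
  assumes "0 \<le> x 1" "0 \<le> x 2" "x 2 \<le> 1"
  shows "psi d x 1 \<le> 1"
proof -
  have "x 1 * x 2 \<le> x 1" using assms by (simp add: mult_left_le)
  then have "(1 + x 1 + x 1 * x 2) / (1 + 2 * x 1) \<le> 1" using assms by simp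
  then show ?thesis using assms unfolding psi_1 by (simp add: power_le_one)
qed

lemma power_le_one_hundredth:
  fixes y :: real
  assumes "0 \<le> y" "y \<le> 13/25" "d \<ge> 8"
  shows "y ^ d \<le> 1/100"
proof -
  have "y ^ d \<le> y ^ 8" using assms by (intro power_decreasing) auto
  also have "\<dots> \<le> (13/25) ^ 8" using assms by (intro power_mono) auto
  also have "\<dots> \<le> 1/100" by (simp add: power_divide)
  finally show ?thesis .
qed

lemma psi_tail_small:
  assumes "trapped x" "d \<ge> 8" "n \<ge> 2"
  shows "psi d x n \<le> 1/100"
proof -
  have nonneg: "0 \<le> x (n - 1)" "0 \<le> x n" "0 \<le> x (n + 1)"
    and small: "x n \<le> 1/100" "x (n + 1) \<le> 1/100"
    using assms unfolding trapped_def by auto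
  have "x (n - 1) \<le> 1"
    using assms unfolding trapped_def by (cases "n = 2") (auto dest: spec[of _ "n - 1"])
  define D where "D = 1 + x (n - 1) + x (n - 1) * x n"
  have D: "1 + x (n - 1) \<le> D" using nonneg unfolding D_def by simp
  have "x n * x (n + 1) \<le> (1/100) * (1/100)" using nonneg small by (intro mult_mono) auto
  then have numerator: "1 + x n + x n * x (n + 1) \<le> 10101/10000" using small by simp
  have "x (n - 1) / D \<le> 1/2" using D nonneg \<open>x (n - 1) \<le> 1\<close> by (simp add: divide_simps)
  have "x (n - 1) * ((1 + x n + x n * x (n + 1)) / D) = x (n - 1) / D * (1 + x n + x n * x (n + 1))"
    by simp
  also have "\<dots> \<le> 1/2 * (10101/10000)"
    using \<open>x (n - 1) / D \<le> 1/2\<close> numerator nonneg D by (intro mult_mono) auto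
  also have "\<dots> \<le> 13/25" by simp
  finally have "x (n - 1) * ((1 + x n + x n * x (n + 1)) / D) \<le> 13/25" .
  moreover have "0 \<le> x (n - 1) * ((1 + x n + x n * x (n + 1)) / D)" using nonneg D by simp
  ultimately show ?thesis
    using power_le_one_hundredth assms by (simp add: psi_ge_2 D_def)
qed

lemma trapped_psi:
  assumes "trapped x" "d \<ge> 8"
  shows "trapped (psi d x)"
  using assms psi_nonneg[of x] psi_1_le_one[of x] psi_tail_small[of x]
  unfolding trapped_def by auto

lemma psi_1_lower_bound:
  assumes "0 \<le> x 1" "0 \<le> x 2" "x 1 \<le> b" "a \<le> ((1 + b) / (1 + 2 * b)) ^ d"
  shows "a \<le> psi d x 1"
proof -
  have "(1 + b) / (1 + 2 * b) \<le> (1 + x 1) / (1 + 2 * x 1)"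
    using assms by (simp add: divide_simps) (auto simp: algebra_simps)
  also have "\<dots> \<le> (1 + x 1 + x 1 * x 2) / (1 + 2 * x 1)"
    using assms by (simp add: divide_right_mono)
  finally have "((1 + b) / (1 + 2 * b)) ^ d \<le> ((1 + x 1 + x 1 * x 2) / (1 + 2 * x 1)) ^ d"
    using assms by (intro power_mono) auto
  then show ?thesis using assms(4) unfolding psi_1 by simp
qed

lemma psi_1_upper_bound:
  assumes "0 \<le> x 2" "x 2 \<le> 1/100" "0 \<le> a" "a \<le> x 1"
    and "((1 + a * (101/100)) / (1 + 2 * a)) ^ d \<le> b"
  shows "psi d x 1 \<le> b"
proof -
  have "x 1 * x 2 \<le> x 1 * (1/100)" using assms by (intro mult_left_mono) auto
  then have "(1 + x 1 + x 1 * x 2) / (1 + 2 * x 1) \<le> (1 + x 1 * (101/100)) / (1 + 2 * x 1)"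
    using assms by (intro divide_right_mono) auto
  also have "\<dots> \<le> (1 + a * (101/100)) / (1 + 2 * a)"
    using assms by (simp add: divide_simps) (auto simp: algebra_simps)
  finally have "((1 + x 1 + x 1 * x 2) / (1 + 2 * x 1)) ^ d \<le> ((1 + a * (101/100)) / (1 + 2 * a)) ^ d"
    using assms by (intro power_mono) auto
  then show ?thesis using assms(5) unfolding psi_1 by simp
qed

lemma psi_iterates_alternate:
  assumes "d \<ge> 8" "0 \<le> a" "0 \<le> b"
    and up: "a \<le> ((1 + b) / (1 + 2 * b)) ^ d"
    and down: "((1 + a * (101/100)) / (1 + 2 * a)) ^ d \<le> b"
  shows "trapped ((psi d ^^ k) (\<lambda>_. 0)) \<and>
    (if even k then ((psi d ^^ k) (\<lambda>_. 0)) 1 \<le> b else a \<le> ((psi d ^^ k) (\<lambda>_. 0)) 1)"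
proof (induction k)
  case 0
  then show ?case using assms by (simp add: trapped_def)
next
  case (Suc k)
  let ?x = "(psi d ^^ k) (\<lambda>_. 0)"
  have trapped: "trapped ?x" using Suc by blast
  then have "0 \<le> ?x 1" "0 \<le> ?x 2" "?x 2 \<le> 1/100" unfolding trapped_def by auto
  then show ?case
    using Suc trapped_psi[OF trapped assms(1)] assms
      psi_1_lower_bound[of ?x b a d] psi_1_upper_bound[of ?x a d b]
    by auto
qed

lemma real_times_three_quarters_power_le: "n \<ge> 12 \<Longrightarrow> real n * (3/4) ^ n \<le> 2/5"
proof (induction n rule: nat_induct_at_least)
  case base
  then show ?case by (simp add: power_divide)
next
  case (Suc n)
  have "real (Suc n) * (3/4) ^ Suc n = (3 * real (Suc n) / 4) * (3/4) ^ n" by simp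
  also have "\<dots> \<le> real n * (3/4) ^ n" using Suc by (intro mult_right_mono) auto
  finally show ?case using Suc.IH by linarith
qed

lemma alternation_bounds_large_d:
  assumes "d \<ge> 12"
  defines "b \<equiv> (3/4 :: real) ^ d"
  shows "b < 3/5" "3/5 \<le> ((1 + b) / (1 + 2 * b)) ^ d"
    "((1 + 3/5 * (101/100)) / (1 + 2 * (3/5))) ^ d \<le> b"
proof -
  have b0: "0 \<le> b" unfolding b_def by simp
  have "b \<le> (3/4) ^ 2" unfolding b_def using assms by (intro power_decreasing) auto
  then show b: "b < 3/5" by (simp add: power_divide)
  have "(1 - b) * (1 + 2 * b) \<le> 1 + b" using b0 by (simp add: algebra_simps)
  then have "1 - b \<le> (1 + b) / (1 + 2 * b)" using b0 by (simp add: pos_le_divide_eq)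
  then have "(1 - b) ^ d \<le> ((1 + b) / (1 + 2 * b)) ^ d" using b by (intro power_mono) auto
  moreover have "1 - real d * b \<le> (1 - b) ^ d"
    using Bernoulli_inequality[of "-b" d] b by simp
  moreover have "real d * b \<le> 2/5"
    unfolding b_def using real_times_three_quarters_power_le[OF assms(1)] .
  ultimately show "3/5 \<le> ((1 + b) / (1 + 2 * b)) ^ d" by linarith
  show "((1 + 3/5 * (101/100)) / (1 + 2 * (3/5))) ^ d \<le> b"
    unfolding b_def by (intro power_mono) auto
qed

lemma alternation_bounds_exist:
  assumes "d \<ge> 8"
  obtains a b :: real where "0 \<le> b" "b < a" "a \<le> ((1 + b) / (1 + 2 * b)) ^ d"
    "((1 + a * (101/100)) / (1 + 2 * a)) ^ d \<le> b"
proof -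
  consider "d = 8" | "d = 9" | "d = 10" | "d = 11" | "d \<ge> 12" using assms by linarith
  then show ?thesis
  proof cases
    case 1
    show ?thesis by (rule that[of "9/50" "8/25"]) (simp_all add: 1 power_divide)
  next
    case 2
    show ?thesis by (rule that[of "3/50" "3/5"]) (simp_all add: 2 power_divide)
  next
    case 3
    show ?thesis by (rule that[of "3/100" "3/4"]) (simp_all add: 3 power_divide)
  next
    case 4
    show ?thesis by (rule that[of "1/50" "4/5"]) (simp_all add: 4 power_divide)
  next
    case 5
    show ?thesis
      using alternation_bounds_large_d[OF 5] by (intro that[of "(3/4) ^ d" "3/5"]) simp_all
  qed
qed

lemma not_convergent_alternating:
  fixes f :: "nat \<Rightarrow> real"
  assumes "b < a" "\<And>k. f (2 * k) \<le> b" "\<And>k. a \<le> f (2 * k + 1)"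
  shows "\<not> convergent f"
proof
  assume "convergent f"
  then obtain L where L: "f \<longlonglongrightarrow> L" by (auto simp: convergent_def)
  have "(\<lambda>k. f (2 * k)) \<longlonglongrightarrow> L"
    using LIMSEQ_subseq_LIMSEQ[OF L, of "\<lambda>k. 2 * k"] by (simp add: strict_mono_def o_def)
  then have "L \<le> b" using assms(2) by (intro LIMSEQ_le_const2) auto
  have "(\<lambda>k. f (2 * k + 1)) \<longlonglongrightarrow> L"
    using LIMSEQ_subseq_LIMSEQ[OF L, of "\<lambda>k. 2 * k + 1"] by (simp add: strict_mono_def o_def)
  then have "a \<le> L" using assms(3) by (intro LIMSEQ_le_const) auto
  with \<open>L \<le> b\<close> \<open>b < a\<close> show False by simp
qed

theorem theorem2p5:
  fixes d :: nat
  assumes "d \<ge> 8"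
  shows "\<not> (\<forall>n\<ge>1. convergent (\<lambda>k. ((psi d ^^ k) (\<lambda>_. 0)) n))"
proof -
  obtain a b :: real where ab: "0 \<le> b" "b < a" "a \<le> ((1 + b) / (1 + 2 * b)) ^ d"
    "((1 + a * (101/100)) / (1 + 2 * a)) ^ d \<le> b"
    using alternation_bounds_exist[OF assms] .
  have "0 \<le> a" using ab by linarith
  note alternate = psi_iterates_alternate[OF assms \<open>0 \<le> a\<close> ab(1,3,4)]
  have "\<not> convergent (\<lambda>k. ((psi d ^^ k) (\<lambda>_. 0)) 1)"
  proof (rule not_convergent_alternating[OF ab(2)])
    show "((psi d ^^ (2 * k)) (\<lambda>_. 0)) 1 \<le> b" for k
      using alternate[of "2 * k"] by simp
    show "a \<le> ((psi d ^^ (2 * k + 1)) (\<lambda>_. 0)) 1" for k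
      using alternate[of "2 * k + 1"] by simp
  qed
  then show ?thesis by blast
qed

end
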